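(* $\mathcal T_\rightarrow=Gh_\rightarrow$ and $\mathcal T_\leftarrow=Gh_\leftarrow$, where $h_\rightarrow=\{(0,i\sinh v,\cosh v):v>0\}$ and $h_\leftarrow=\{(0,i\sinh v,\cosh v):v<0\}$.
   Context: $[z\cdot z']=z_0z'_0-z_1z'_1-z_2z'_2$ on $\mathbb C^3$, $z^2=[z\cdot z]$; $X^{(c)}=\{z\in\mathbb C^3:z^2=-1\}$, $z=x+iy$; $V^+=\{y\in\mathbb R^3:y^2>0,y_0>0\}$; fix $e\in V^+$; $\mathcal T_\rightarrow=\{z=x+iy\in X^{(c)}:y^2<0,{\rm sgn}\det(e,x,y)=-1\}$, $\mathcal T_\leftarrow=\{z=x+iy\in X^{(c)}:y^2<0,{\rm sgn}\det(e,x,y)=+1\}$ (independent of the choice of $e$). $G=SO_0(1,2)$ acting on $X^{(c)}$ by $gz=gx+igy$. *)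

theory Defs
  imports "HOL-Analysis.Analysis"
begin

text \<open>Coordinates z_0, z_1, z_2 of the paper are the components 1, 2, 3 of a vector of type ^3.\<close>

definition lor :: "'a::comm_ring ^ 3 \<Rightarrow> 'a ^ 3 \<Rightarrow> 'a" where
  "lor z w = z$1 * w$1 - z$2 * w$2 - z$3 * w$3"

definition Xc :: "(complex ^ 3) set" where
  "Xc = {z. lor z z = -1}"

definition ReV :: "complex ^ 3 \<Rightarrow> real ^ 3" where
  "ReV z = (\<chi> i. Re (z$i))"

definition ImV :: "complex ^ 3 \<Rightarrow> real ^ 3" where
  "ImV z = (\<chi> i. Im (z$i))"

definition Vplus :: "(real ^ 3) set" where
  "Vplus = {y. lor y y > 0 \<and> y$1 > 0}"

definition det3 :: "real ^ 3 \<Rightarrow> real ^ 3 \<Rightarrow> real ^ 3 \<Rightarrow> real" where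
  "det3 e x y = det (vector [e, x, y] :: real ^ 3 ^ 3)"

definition T_right :: "real ^ 3 \<Rightarrow> (complex ^ 3) set" where
  "T_right e = {z \<in> Xc. lor (ImV z) (ImV z) < 0 \<and> sgn (det3 e (ReV z) (ImV z)) = -1}"

definition T_left :: "real ^ 3 \<Rightarrow> (complex ^ 3) set" where
  "T_left e = {z \<in> Xc. lor (ImV z) (ImV z) < 0 \<and> sgn (det3 e (ReV z) (ImV z)) = 1}"

text \<open>G = SO_0(1,2): linear maps preserving the Lorentz form, determinant 1, time-orientation preserving
  (g_00 > 0), i.e. the identity component of O(1,2).\<close>
definition SO0_12 :: "(real ^ 3 ^ 3) set" where
  "SO0_12 = {g. (\<forall>x y. lor (g *v x) (g *v y) = lor x y) \<and> det g = 1 \<and> g$1$1 > 0}"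

definition gact :: "real ^ 3 ^ 3 \<Rightarrow> complex ^ 3 \<Rightarrow> complex ^ 3" where
  "gact g z = (\<chi> i. Complex ((g *v ReV z)$i) ((g *v ImV z)$i))"

definition Gorbit :: "(complex ^ 3) set \<Rightarrow> (complex ^ 3) set" where
  "Gorbit H = {gact g z | g z. g \<in> SO0_12 \<and> z \<in> H}"

definition h_right :: "(complex ^ 3) set" where
  "h_right = {vector [0, \<i> * complex_of_real (sinh v), complex_of_real (cosh v)] | v. v > (0::real)}"

definition h_left :: "(complex ^ 3) set" where
  "h_left = {vector [0, \<i> * complex_of_real (sinh v), complex_of_real (cosh v)] | v. v < (0::real)}"

end

theory Submission
  imports Defs
begin

text \<open>Write \<open>z = x + i y\<close>. On the complex hyperboloid \<open>z\<^sup>2 = -1\<close> with \<open>y\<^sup>2 < 0\<close> the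
  conditions \<open>x\<^sup>2 - y\<^sup>2 = -1\<close>, \<open>[x\<cdot>y] = 0\<close> say that \<open>x / cosh v\<close> and \<open>y / sinh v\<close>, where
  \<open>sinh\<^sup>2 v = -y\<^sup>2\<close>, are Lorentz-orthonormal spacelike vectors. Completed by their Lorentz cross
  product they form the columns of some \<open>g \<in> SO\<^sub>0(1,2)\<close> with \<open>z = g (0, i sinh v, cosh v)\<close>, once
  the sign of \<open>v\<close> is chosen so that the cross product is future pointing. Conversely, for such
  \<open>z\<close> one finds \<open>det(e,x,y) = - cosh v sinh v [e\<cdot>g\<^sub>0]\<close> with \<open>g\<^sub>0\<close> the first column of \<open>g\<close>,
  and \<open>[e\<cdot>g\<^sub>0] > 0\<close> as both vectors lie in \<open>V\<^sup>+\<close>. Hence the sign of \<open>det(e,x,y)\<close> is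
  \<open>-sgn v\<close>, which separates the two orbits.\<close>

lemma lor_commute: "lor x y = lor y x"
  unfolding lor_def by (simp add: algebra_simps)

lemma lor_scaleR_left [simp]: "lor (a *\<^sub>R x) (y::real^3) = a * lor x y"
  and lor_scaleR_right [simp]: "lor x (a *\<^sub>R (y::real^3)) = a * lor x y"
  and lor_minus_left [simp]: "lor (- x) (y::real^3) = - lor x y"
  and lor_minus_right [simp]: "lor x (- (y::real^3)) = - lor x y"
  and lor_diff_right: "lor x (y - w) = lor x y - lor x (w::real^3)"
  unfolding lor_def by (simp_all add: algebra_simps)

lemma lor_axis [simp]:
  "lor (axis i 1) (axis j (1::real)) = (if i = j then if i = 1 then 1 else -1 else 0)"
  using exhaust_3[of i] exhaust_3[of j] by (auto simp: lor_def axis_def)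

text \<open>\<open>lcross x y = diag(1,-1,-1) (x \<times> y)\<close>, the Lorentz analogue of the cross product.\<close>
definition lcross :: "real^3 \<Rightarrow> real^3 \<Rightarrow> real^3" where
  "lcross x y = vector [x$2*y$3 - x$3*y$2, x$1*y$3 - x$3*y$1, x$2*y$1 - x$1*y$2]"

lemma det3_eq_lor_lcross: "det3 e x y = lor e (lcross x y)"
  unfolding det3_def det_3 lor_def lcross_def by (simp add: algebra_simps)

lemma lor_lcross_fst [simp]: "lor (lcross x y) x = 0" "lor x (lcross x y) = 0"
  and lor_lcross_snd [simp]: "lor (lcross x y) y = 0" "lor y (lcross x y) = 0"
  unfolding lor_def lcross_def by (simp_all add: algebra_simps)

lemma lor_lcross_self: "lor (lcross x y) (lcross x y) = lor x x * lor y y - (lor x y)\<^sup>2"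
  unfolding lor_def lcross_def by (simp add: algebra_simps power2_eq_square)

lemma lcross_commute: "lcross y x = - lcross x y"
  unfolding lcross_def by (simp add: vec_eq_iff forall_3)

lemma lcross_scaleR [simp]: "lcross (a *\<^sub>R x) (b *\<^sub>R y) = (a * b) *\<^sub>R lcross x y"
  and lcross_minus_left [simp]: "lcross (- x) y = - lcross x y"
  unfolding lcross_def by (simp_all add: vec_eq_iff forall_3 algebra_simps)

lemma lor_pos_if_Vplus:
  assumes "a \<in> Vplus" "b \<in> Vplus"
  shows "lor a b > 0"
proof -
  have cauchy_schwarz: "(a$2*b$2 + a$3*b$3)\<^sup>2 \<le> ((a$2)\<^sup>2 + (a$3)\<^sup>2) * ((b$2)\<^sup>2 + (b$3)\<^sup>2)"
    using zero_le_power2[of "a$2*b$3 - a$3*b$2"] by (simp add: power2_eq_square algebra_simps)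
  have "(a$2)\<^sup>2 + (a$3)\<^sup>2 < (a$1)\<^sup>2" "(b$2)\<^sup>2 + (b$3)\<^sup>2 < (b$1)\<^sup>2"
    using assms unfolding Vplus_def lor_def by (simp_all add: power2_eq_square)
  then have "((a$2)\<^sup>2 + (a$3)\<^sup>2) * ((b$2)\<^sup>2 + (b$3)\<^sup>2) < (a$1 * b$1)\<^sup>2"
    by (simp add: power_mult_distrib mult_strict_mono')
  with cauchy_schwarz have "(a$2*b$2 + a$3*b$3)\<^sup>2 < (a$1 * b$1)\<^sup>2" by linarith
  moreover have "a$1 * b$1 > 0" using assms unfolding Vplus_def by simp
  ultimately have "a$2*b$2 + a$3*b$3 < a$1 * b$1"
    by (smt (verit) power_mono)
  then show ?thesis unfolding lor_def by simp
qed

lemma timelike_Vplus_cases: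
  assumes "lor n n > 0"
  shows "n \<in> Vplus \<or> - n \<in> Vplus"
proof -
  have "n$1 \<noteq> 0"
  proof
    assume "n$1 = 0"
    then have "lor n n = - ((n$2)\<^sup>2 + (n$3)\<^sup>2)" unfolding lor_def by (simp add: power2_eq_square)
    with assms show False by (smt (verit) zero_le_power2)
  qed
  then show ?thesis using assms unfolding Vplus_def by auto
qed

lemma lor_matrix_vector_mult:
  "lor ((g::real^3^3) *v x) (g *v y) =
     (\<Sum>i\<in>UNIV. \<Sum>j\<in>UNIV. x$i * y$j * lor (column i g) (column j g))"
  unfolding lor_def matrix_vector_mult_def column_def
  by (simp only: sum_3 vec_lambda_beta) (simp add: algebra_simps)

lemma lor_preserving_iff_columns:
  "(\<forall>x y. lor ((g::real^3^3) *v x) (g *v y) = lor x y) \<longleftrightarrow>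
     (\<forall>i j. lor (column i g) (column j g) = lor (axis i 1) (axis j 1))"
proof
  assume "\<forall>x y. lor (g *v x) (g *v y) = lor x y"
  then show "\<forall>i j. lor (column i g) (column j g) = lor (axis i 1) (axis j 1)"
    by (simp flip: matrix_vector_mult_basis)
next
  assume "\<forall>i j. lor (column i g) (column j g) = lor (axis i 1) (axis j 1)"
  then show "\<forall>x y. lor (g *v x) (g *v y) = lor x y"
    by (simp add: lor_matrix_vector_mult sum_3, simp add: lor_def)
qed

lemma lor_orthogonal_to_columns_eq_0:
  assumes "invertible (g::real^3^3)" "\<And>j. lor (column j g) d = 0"
  shows "d = 0"
proof -
  define Jd where "Jd = (\<chi> i. if i = 1 then d$1 else - d$i)"
  have "(transpose g *v Jd) $ j = lor (column j g) d" for j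
    unfolding Jd_def lor_def matrix_vector_mult_def transpose_def column_def sum_3 by simp
  then have "transpose g *v Jd = 0" using assms(2) by (simp add: vec_eq_iff)
  moreover have "invertible (transpose g)" using assms(1) by (simp add: invertible_det_nz)
  ultimately have "Jd = 0" by (metis invertible_def matrix_left_invertible_ker)
  then show ?thesis unfolding Jd_def by (simp add: vec_eq_iff forall_3)
qed

lemma det_columns_eq_det3: "det (g::real^3^3) = det3 (column 1 g) (column 2 g) (column 3 g)"
proof -
  have "vector [column 1 g, column 2 g, column 3 g] = transpose g"
    by (simp add: vec_eq_iff forall_3 column_def transpose_def)
  then show ?thesis unfolding det3_def by simp
qed

lemma SO0_12_iff_frame:
  "g \<in> SO0_12 \<longleftrightarrow>
     lor (column 2 g) (column 2 g) = -1 \<and> lor (column 3 g) (column 3 g) = -1 \<and>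
     lor (column 2 g) (column 3 g) = 0 \<and>
     column 1 g = lcross (column 2 g) (column 3 g) \<and> column 1 g \<in> Vplus"
  (is "_ \<longleftrightarrow> ?c22 \<and> ?c33 \<and> ?c23 \<and> ?c1 \<and> ?future")
proof
  assume g: "g \<in> SO0_12"
  then have col: "lor (column i g) (column j g) = lor (axis i 1) (axis j 1)" for i j
    unfolding SO0_12_def lor_preserving_iff_columns by blast
  then show "?c22 \<and> ?c33 \<and> ?c23 \<and> ?c1 \<and> ?future"
  proof (intro conjI)
    define d where "d = lcross (column 2 g) (column 3 g) - column 1 g"
    have "det g = 1" using g unfolding SO0_12_def by simp
    then have "lor (column 1 g) (lcross (column 2 g) (column 3 g)) = 1"
      by (simp add: det_columns_eq_det3 det3_eq_lor_lcross)
    then have "lor (column j g) d = 0" for j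
      using exhaust_3[of j] unfolding d_def lor_diff_right col by auto
    moreover have "invertible g" using \<open>det g = 1\<close> by (simp add: invertible_det_nz)
    ultimately have "d = 0" using lor_orthogonal_to_columns_eq_0 by blast
    then show ?c1 unfolding d_def by simp
    show ?future using g col[of 1 1] unfolding SO0_12_def Vplus_def by (simp add: column_def)
  qed simp_all
next
  assume frame: "?c22 \<and> ?c33 \<and> ?c23 \<and> ?c1 \<and> ?future"
  then have "lor (column 1 g) (column 1 g) = 1" "lor (column 1 g) (column 2 g) = 0"
    "lor (column 1 g) (column 3 g) = 0"
    by (simp_all add: lor_lcross_self)
  then have "lor (column i g) (column j g) = lor (axis i 1) (axis j 1)" for i j
    using frame exhaust_3[of i] exhaust_3[of j] lor_commute[of "column i g" "column j g"]
    by (elim conjE disjE) simp_all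
  moreover have "det g = 1"
    using frame \<open>lor (column 1 g) (column 1 g) = 1\<close>
    by (simp add: det_columns_eq_det3 det3_eq_lor_lcross)
  moreover have "g$1$1 > 0" using frame unfolding Vplus_def column_def by simp
  ultimately show "g \<in> SO0_12" unfolding SO0_12_def lor_preserving_iff_columns by blast
qed

lemma lor_self_complex:
  "lor z z = Complex (lor (ReV z) (ReV z) - lor (ImV z) (ImV z)) (2 * lor (ReV z) (ImV z))"
  unfolding lor_def ReV_def ImV_def by (simp add: complex_eq_iff power2_eq_square algebra_simps)

lemma Xc_iff: "z \<in> Xc \<longleftrightarrow> lor (ReV z) (ReV z) - lor (ImV z) (ImV z) = -1 \<and> lor (ReV z) (ImV z) = 0"
  unfolding Xc_def by (simp add: lor_self_complex complex_eq_iff)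

lemma complex_vec_eqI: "ReV z = ReV w \<Longrightarrow> ImV z = ImV w \<Longrightarrow> z = w"
  unfolding ReV_def ImV_def by (simp add: vec_eq_iff complex_eq_iff)

lemma ReV_gact: "ReV (gact g z) = g *v ReV z"
  and ImV_gact: "ImV (gact g z) = g *v ImV z"
  unfolding ReV_def ImV_def gact_def by (simp_all add: vec_eq_iff)

definition h_point :: "real \<Rightarrow> complex^3" where
  "h_point v = vector [0, \<i> * complex_of_real (sinh v), complex_of_real (cosh v)]"

lemma h_right_eq: "h_right = h_point ` {v. sgn v = 1}"
  and h_left_eq: "h_left = h_point ` {v. sgn v = -1}"
  unfolding h_right_def h_left_def h_point_def by (auto simp: sgn_real_def split: if_splits)

lemma ReV_gact_h_point: "ReV (gact g (h_point v)) = cosh v *\<^sub>R column 3 g"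
  and ImV_gact_h_point: "ImV (gact g (h_point v)) = sinh v *\<^sub>R column 2 g"
proof -
  have "ReV (h_point v) = vector [0, 0, cosh v]" "ImV (h_point v) = vector [0, sinh v, 0]"
    unfolding ReV_def ImV_def h_point_def by (simp_all add: vec_eq_iff forall_3)
  then show "ReV (gact g (h_point v)) = cosh v *\<^sub>R column 3 g"
    "ImV (gact g (h_point v)) = sinh v *\<^sub>R column 2 g"
    by (simp_all add: ReV_gact ImV_gact vec_eq_iff matrix_vector_mult_def column_def sum_3)
qed

lemma gact_h_point_invariants:
  fixes v :: real
  assumes "g \<in> SO0_12" "e \<in> Vplus"
  defines "z \<equiv> gact g (h_point v)"
  shows "z \<in> Xc" "lor (ImV z) (ImV z) = - (sinh v)\<^sup>2"
    "sgn (det3 e (ReV z) (ImV z)) = - sgn v"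
proof -
  have frame: "lor (column 2 g) (column 2 g) = -1" "lor (column 3 g) (column 3 g) = -1"
    "lor (column 2 g) (column 3 g) = 0" "column 1 g = lcross (column 2 g) (column 3 g)"
    "column 1 g \<in> Vplus"
    using assms(1) unfolding SO0_12_iff_frame by blast+
  show "z \<in> Xc"
    unfolding Xc_iff z_def ReV_gact_h_point ImV_gact_h_point
    using frame(1-3)
    by (simp add: lor_commute[of "column 3 g" "column 2 g"] cosh_square_eq flip: power2_eq_square)
  show "lor (ImV z) (ImV z) = - (sinh v)\<^sup>2"
    unfolding z_def ImV_gact_h_point using frame(1) by (simp add: power2_eq_square)
  have "det3 e (ReV z) (ImV z) = - (cosh v * sinh v * lor e (column 1 g))"
    unfolding z_def ReV_gact_h_point ImV_gact_h_point det3_eq_lor_lcross frame(4)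
    by (simp add: lcross_commute[of "column 3 g"])
  moreover have "lor e (column 1 g) > 0" using assms(2) frame(5) by (rule lor_pos_if_Vplus)
  moreover have "sgn (sinh v) = sgn v" by (simp add: sgn_real_def)
  ultimately show "sgn (det3 e (ReV z) (ImV z)) = - sgn v"
    by (simp add: sgn_mult)
qed

lemma gact_h_point_cover:
  assumes "z \<in> Xc" "lor (ImV z) (ImV z) < 0"
  obtains g v where "g \<in> SO0_12" "z = gact g (h_point v)"
proof -
  define x y where "x = ReV z" and "y = ImV z"
  have xx: "lor x x = lor y y - 1" and xy: "lor y x = 0"
    using assms(1) lor_commute[of x y] unfolding Xc_iff x_def y_def by simp_all
  define s0 where "s0 = sqrt (- lor y y)"
  have "s0 > 0" and yy: "lor y y = - s0\<^sup>2"
    using assms(2) unfolding s0_def y_def by simp_all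
  define c where "c = sqrt (s0\<^sup>2 + 1)"
  have "c > 0" and xx': "lor x x = - c\<^sup>2"
    unfolding c_def xx yy by (simp_all add: add_nonneg_pos)
  define n where "n = lcross ((1 / s0) *\<^sub>R y) ((1 / c) *\<^sub>R x)"
  have "lor (lcross y x) (lcross y x) = (s0 * c)\<^sup>2"
    by (simp add: lor_lcross_self xx' yy xy power_mult_distrib)
  then have "lor n n > 0" using \<open>s0 > 0\<close> \<open>c > 0\<close> unfolding n_def by simp
  then have "n \<in> Vplus \<or> - n \<in> Vplus" by (rule timelike_Vplus_cases)
  \<comment> \<open>the sign of \<open>sinh v\<close> is the one making the frame below future pointing\<close>
  then obtain s where s_sq: "s\<^sup>2 = s0\<^sup>2" and "s \<noteq> 0"
    and future: "lcross ((1 / s) *\<^sub>R y) ((1 / c) *\<^sub>R x) \<in> Vplus"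
  proof
    assume "n \<in> Vplus"
    then show ?thesis using that \<open>s0 > 0\<close> unfolding n_def by blast
  next
    assume "- n \<in> Vplus"
    then show ?thesis using that[of "- s0"] \<open>s0 > 0\<close> unfolding n_def by simp
  qed
  define v where "v = arsinh s"
  have "sinh v = s" "cosh v = c"
    unfolding v_def c_def by (simp_all add: cosh_arsinh_real s_sq)
  define g2 g3 where "g2 = (1 / s) *\<^sub>R y" and "g3 = (1 / c) *\<^sub>R x"
  define g where "g = transpose (vector [lcross g2 g3, g2, g3] :: real^3^3)"
  have columns: "column 1 g = lcross g2 g3" "column 2 g = g2" "column 3 g = g3"
    unfolding g_def by (simp_all add: column_def transpose_def vec_eq_iff)
  have "lor g2 g2 = -1"
    using \<open>s0 > 0\<close> yy s_sq by (simp add: g2_def power2_eq_square)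
  moreover have "lor g3 g3 = -1"
    using \<open>c > 0\<close> xx' by (simp add: g3_def power2_eq_square)
  moreover have "lor g2 g3 = 0" unfolding g2_def g3_def by (simp add: xy)
  moreover have "lcross g2 g3 \<in> Vplus" using future unfolding g2_def g3_def .
  ultimately have "g \<in> SO0_12" unfolding SO0_12_iff_frame columns by blast
  moreover have "z = gact g (h_point v)"
    using \<open>s \<noteq> 0\<close> \<open>c > 0\<close>
    by (intro complex_vec_eqI)
       (simp_all add: ReV_gact_h_point ImV_gact_h_point columns \<open>sinh v = s\<close> \<open>cosh v = c\<close>
         g2_def g3_def x_def y_def)
  ultimately show ?thesis by (rule that)
qed

lemma Gorbit_h_point_sgn:
  fixes \<sigma> :: real
  assumes "e \<in> Vplus" "\<sigma> \<noteq> 0"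
  shows "Gorbit (h_point ` {v. sgn v = \<sigma>}) =
    {z \<in> Xc. lor (ImV z) (ImV z) < 0 \<and> sgn (det3 e (ReV z) (ImV z)) = - \<sigma>}"
proof (intro set_eqI iffI)
  fix z
  assume "z \<in> Gorbit (h_point ` {v. sgn v = \<sigma>})"
  then obtain g v where "g \<in> SO0_12" "sgn v = \<sigma>" "z = gact g (h_point v)"
    unfolding Gorbit_def by blast
  moreover from \<open>sgn v = \<sigma>\<close> \<open>\<sigma> \<noteq> 0\<close> have "sinh v \<noteq> 0" by auto
  ultimately show "z \<in> {z \<in> Xc. lor (ImV z) (ImV z) < 0 \<and> sgn (det3 e (ReV z) (ImV z)) = - \<sigma>}"
    using gact_h_point_invariants[OF _ assms(1)] by auto
next
  fix z
  assume z: "z \<in> {z \<in> Xc. lor (ImV z) (ImV z) < 0 \<and> sgn (det3 e (ReV z) (ImV z)) = - \<sigma>}"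
  then obtain g v where "g \<in> SO0_12" "z = gact g (h_point v)"
    using gact_h_point_cover by blast
  moreover have "sgn v = \<sigma>"
    using z gact_h_point_invariants(3)[OF \<open>g \<in> SO0_12\<close> assms(1), of v] \<open>z = _\<close> by simp
  ultimately show "z \<in> Gorbit (h_point ` {v. sgn v = \<sigma>})"
    unfolding Gorbit_def by blast
qed

theorem proposition5:
  fixes e :: "real ^ 3"
  assumes "e \<in> Vplus"
  shows "T_right e = Gorbit h_right \<and> T_left e = Gorbit h_left"
  using Gorbit_h_point_sgn[OF assms, of 1] Gorbit_h_point_sgn[OF assms, of "-1"]
  unfolding T_right_def T_left_def h_right_eq h_left_eq by simp

end
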